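(* Let $v \sim \mathcal{N}(0, I_d)$ and $\alpha > 0$. Then for any $p \ge 1$ and any fixed unit vector $s \in \mathbb{S}^{d-1}$, $$\mathbb{E}[\|v\|^p \mid |\langle v, s\rangle| \ge \alpha]^{1/p} \le 2\alpha + (2p)^{1/2} + (d+p-1)^{1/2}.$$
   Context: $\|\cdot\|$ is the Euclidean norm and $\langle\cdot,\cdot\rangle$ the standard inner product on $\mathbb{R}^d$. *)

theory Defs
  imports "HOL-Probability.Probability"
begin

definition std_gaussian :: "'a::euclidean_space measure" where
  "std_gaussian = density lborel
     (\<lambda>x. ennreal ((2 * pi) powr (- real DIM('a) / 2) * exp (- (norm x)\<^sup>2 / 2)))"

definition cond_exp_event :: "'a measure \<Rightarrow> ('a \<Rightarrow> real) \<Rightarrow> 'a set \<Rightarrow> real" where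
  "cond_exp_event M f A = (\<integral>x. indicator A x * f x \<partial>M) / measure M A"

end

theory Submission
  imports Defs
begin

(*
  Write v = t s + w with t = v \<bullet> s and w orthogonal to s. Under the Gaussian, t and w are
  independent and the event only constrains t. For a, b > 0, convexity of x powr p gives
    norm v powr p \<le> (|t| + norm w) powr p
                 \<le> (a + b) powr (p - 1) * (|t| powr p / a powr (p - 1) + norm w powr p / b powr (p - 1)),
  so it suffices to bound the conditional p-th moment of |t| by a powr p for a = \<alpha> + sqrt (2 p)
  and the p-th moment of norm w by b powr p for b = sqrt (d + p - 1): the right-hand side then
  integrates to (a + b) powr p. The first bound follows from Chebyshev's integral inequality after
  factoring the Gaussian tail, the second from z powr (p / 2) \<le> C exp (\<mu> z) and the moment
  generating function of the chi-squared variable (norm w)\<^sup>2 with d - 1 degrees of freedom.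
*)

section \<open>Elementary inequalities\<close>

lemma sqrt_powr: "x \<ge> 0 \<Longrightarrow> sqrt x powr p = x powr (p / 2)"
  by (simp add: powr_half_sqrt[symmetric] powr_powr)

lemma powr_le_mult_exp:
  fixes z q \<mu> :: real
  assumes z: "z \<ge> 0" and q: "q > 0" and \<mu>: "\<mu> > 0"
  shows "z powr q \<le> (q / (\<mu> * exp 1)) powr q * exp (\<mu> * z)"
proof (cases "z = 0")
  case True
  then show ?thesis using q by simp
next
  case False
  then have z: "z > 0" using z by simp
  have "ln (\<mu> * z / q) \<le> \<mu> * z / q - 1"
    using z q \<mu> by (intro ln_le_minus_one) auto
  then have "q * ln z \<le> q * (ln q - ln \<mu> - 1) + \<mu> * z"
    using z q \<mu> by (simp add: ln_div ln_mult field_simps)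
  then have "exp (q * ln z) \<le> exp (q * (ln q - ln \<mu> - 1) + \<mu> * z)" by simp
  then show ?thesis
    using z q \<mu> by (simp add: powr_def ln_div ln_mult mult_exp_exp algebra_simps)
qed

lemma powr_add_le_convex_split:
  fixes a b u w p :: real
  assumes a: "a > 0" and b: "b > 0" and u: "u \<ge> 0" and w: "w \<ge> 0" and p: "p \<ge> 1"
  shows "(u + w) powr p \<le> (a + b) powr (p - 1) * (u powr p / a powr (p - 1) + w powr p / b powr (p - 1))"
proof -
  define S where "S = a + b"
  have S: "S > 0" "a \<le> S" "b \<le> S" using a b by (auto simp: S_def)
  consider "u = 0" | "w = 0" | "u > 0" "w > 0" using u w by linarith
  then show ?thesis
  proof cases
    case 1
    have "b powr (p - 1) \<le> S powr (p - 1)" using S b p by (intro powr_mono2) auto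
    then have "w powr p * 1 \<le> w powr p * (S powr (p - 1) / b powr (p - 1))"
      using b by (intro mult_left_mono) auto
    then show ?thesis using 1 p by (simp add: S_def mult.commute)
  next
    case 2
    have "a powr (p - 1) \<le> S powr (p - 1)" using S a p by (intro powr_mono2) auto
    then have "u powr p * 1 \<le> u powr p * (S powr (p - 1) / a powr (p - 1))"
      using a by (intro mult_left_mono) auto
    then show ?thesis using 2 p by (simp add: S_def mult.commute)
  next
    case 3
    \<comment> \<open>Jensen for \<open>x powr p\<close> at the points \<open>u S / a\<close>, \<open>w S / b\<close> with weights \<open>a / S\<close>, \<open>b / S\<close>.\<close>
    define t where "t = b / S"
    have t: "0 \<le> t" "t \<le> 1" and omt: "1 - t = a / S"
      using S b by (auto simp: t_def S_def field_simps)
    have x: "u * S / a \<in> {0<..}" and y: "w * S / b \<in> {0<..}" using 3 S a b by auto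
    have "((1 - t) *\<^sub>R (u * S / a) + t *\<^sub>R (w * S / b)) powr p
       \<le> (1 - t) * (u * S / a) powr p + t * (w * S / b) powr p"
      by (rule convex_onD[OF powr_convex[OF p] t x y])
    moreover have "(1 - t) *\<^sub>R (u * S / a) + t *\<^sub>R (w * S / b) = u + w"
      using S a b unfolding omt by (simp add: t_def)
    moreover have "(1 - t) * (u * S / a) powr p = S powr (p - 1) * (u powr p / a powr (p - 1))"
      using S a b 3 unfolding omt by (simp add: powr_divide powr_mult powr_diff field_simps)
    moreover have "t * (w * S / b) powr p = S powr (p - 1) * (w powr p / b powr (p - 1))"
      using S a b 3 by (simp add: t_def powr_divide powr_mult powr_diff field_simps)
    ultimately show ?thesis by (simp add: S_def distrib_left)
  qed
qed

lemma inner_replace_component: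
  fixes v s :: "'a::real_inner"
  assumes "norm s = 1"
  shows "(v + (t - v \<bullet> s) *\<^sub>R s) \<bullet> s = t"
  using assms by (simp add: inner_add_left norm_eq_sqrt_inner algebra_simps)

lemma norm_replace_component:
  fixes v s :: "'a::real_inner"
  assumes "norm s = 1"
  shows "(norm (v + (t - v \<bullet> s) *\<^sub>R s))\<^sup>2 = (norm v)\<^sup>2 - (v \<bullet> s)\<^sup>2 + t\<^sup>2"
proof -
  have "s \<bullet> s = 1" using assms by (simp add: norm_eq_sqrt_inner)
  then show ?thesis
    unfolding power2_norm_eq_inner
    by (simp add: inner_add_left inner_add_right inner_commute power2_eq_square algebra_simps)
qed

lemma inner_sq_le_norm_sq:
  fixes v s :: "'a::real_inner"
  assumes "norm s = 1"
  shows "(v \<bullet> s)\<^sup>2 \<le> (norm v)\<^sup>2"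
  using Cauchy_Schwarz_ineq2[of v s] assms by (metis abs_le_square_iff abs_norm_cancel mult_1_right)

section \<open>Lebesgue integrals\<close>

lemma nn_integral_lborel_translate:
  fixes f :: "'a::euclidean_space \<Rightarrow> ennreal"
  assumes "f \<in> borel_measurable borel"
  shows "(\<integral>\<^sup>+v. f (v + c) \<partial>lborel) = integral\<^sup>N lborel f"
proof -
  have "integral\<^sup>N lborel f = (\<integral>\<^sup>+v. f v \<partial>distr lborel borel ((+) c))"
    by (simp add: lborel_distr_plus)
  also have "\<dots> = (\<integral>\<^sup>+v. f (c + v) \<partial>lborel)"
    using assms by (subst nn_integral_distr) auto
  finally show ?thesis by (simp add: add.commute)
qed

lemma nn_integral_lborel_scaleR:
  fixes f :: "'a::euclidean_space \<Rightarrow> ennreal"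
  assumes [measurable]: "f \<in> borel_measurable borel" and c: "c > 0"
  shows "(\<integral>\<^sup>+x. f (c *\<^sub>R x) \<partial>lborel) = ennreal (1 / c ^ DIM('a)) * integral\<^sup>N lborel f"
proof -
  have "integral\<^sup>N lborel f = integral\<^sup>N (density (distr lborel borel (\<lambda>x. c *\<^sub>R x)) (\<lambda>_. \<bar>c\<bar> ^ DIM('a))) f"
    using lborel_affine[of c "0::'a"] c by simp
  also have "\<dots> = ennreal (c ^ DIM('a)) * (\<integral>\<^sup>+x. f (c *\<^sub>R x) \<partial>lborel)"
    using c by (simp add: nn_integral_density nn_integral_distr nn_integral_cmult)
  finally have "ennreal (1 / c ^ DIM('a)) * integral\<^sup>N lborel f
      = (ennreal (1 / c ^ DIM('a)) * ennreal (c ^ DIM('a))) * (\<integral>\<^sup>+x. f (c *\<^sub>R x) \<partial>lborel)"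
    by (simp add: mult.assoc)
  also have "ennreal (1 / c ^ DIM('a)) * ennreal (c ^ DIM('a)) = 1"
    using c by (simp add: ennreal_mult[symmetric])
  finally show ?thesis by simp
qed

lemma nn_integral_tensor:
  assumes [measurable]: "f \<in> borel_measurable M" "g \<in> borel_measurable N"
  shows "(\<integral>\<^sup>+x. \<integral>\<^sup>+y. f x * g y \<partial>N \<partial>M) = integral\<^sup>N M f * integral\<^sup>N N g"
  by (simp add: nn_integral_cmult nn_integral_multc)

lemma nn_integral_tensor_add:
  assumes [measurable]: "f1 \<in> borel_measurable M" "f2 \<in> borel_measurable M"
    "g1 \<in> borel_measurable N" "g2 \<in> borel_measurable N"
  shows "(\<integral>\<^sup>+x. \<integral>\<^sup>+y. c1 * (f1 x * g1 y) + c2 * (f2 x * g2 y) \<partial>N \<partial>M)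
    = c1 * (integral\<^sup>N M f1 * integral\<^sup>N N g1) + c2 * (integral\<^sup>N M f2 * integral\<^sup>N N g2)"
  by (simp add: nn_integral_add nn_integral_cmult nn_integral_multc mult.assoc)

text \<open>The shear \<open>(t, v) \<mapsto> (v \<bullet> s, v + (t - v \<bullet> s) s)\<close> of \<open>\<real> \<times> \<real>\<^sup>d\<close> preserves Lebesgue measure:
  it is a composition of a reflection, two translations of fibres and two applications of Fubini.\<close>
lemma nn_integral_lborel_shear:
  fixes H :: "real \<Rightarrow> 'a::euclidean_space \<Rightarrow> ennreal" and s :: 'a
  assumes [measurable]: "case_prod H \<in> borel_measurable (lborel \<Otimes>\<^sub>M lborel)" and s: "norm s = 1"
  shows "(\<integral>\<^sup>+t. \<integral>\<^sup>+v. H t v \<partial>lborel \<partial>lborel)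
       = (\<integral>\<^sup>+t. \<integral>\<^sup>+v. H (v \<bullet> s) (v + (t - v \<bullet> s) *\<^sub>R s) \<partial>lborel \<partial>lborel)"
proof -
  have "(\<integral>\<^sup>+t. \<integral>\<^sup>+v. H t v \<partial>lborel \<partial>lborel) = (\<integral>\<^sup>+t. \<integral>\<^sup>+v. H (- t) v \<partial>lborel \<partial>lborel)"
    by (subst nn_integral_real_affine[where c="-1" and t=0]) auto
  also have "\<dots> = (\<integral>\<^sup>+t. \<integral>\<^sup>+v. H (- t) (v + t *\<^sub>R s) \<partial>lborel \<partial>lborel)"
    by (intro nn_integral_cong nn_integral_lborel_translate[symmetric]) measurable
  also have "\<dots> = (\<integral>\<^sup>+v. \<integral>\<^sup>+t. H (- t) (v + t *\<^sub>R s) \<partial>lborel \<partial>lborel)"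
    by (rule lborel_pair.Fubini'[symmetric]) measurable
  also have "\<dots> = (\<integral>\<^sup>+v. \<integral>\<^sup>+t. H (v \<bullet> s - t) (v + (t - v \<bullet> s) *\<^sub>R s) \<partial>lborel \<partial>lborel)"
  proof (rule nn_integral_cong)
    fix v :: 'a
    show "(\<integral>\<^sup>+t. H (- t) (v + t *\<^sub>R s) \<partial>lborel) = (\<integral>\<^sup>+t. H (v \<bullet> s - t) (v + (t - v \<bullet> s) *\<^sub>R s) \<partial>lborel)"
      by (subst nn_integral_real_affine[where c=1 and t="- (v \<bullet> s)"]) auto
  qed
  also have "\<dots> = (\<integral>\<^sup>+t. \<integral>\<^sup>+v. H (v \<bullet> s - t) (v + (t - v \<bullet> s) *\<^sub>R s) \<partial>lborel \<partial>lborel)"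
    by (rule lborel_pair.Fubini') measurable
  also have "\<dots> = (\<integral>\<^sup>+t. \<integral>\<^sup>+v. H ((v + t *\<^sub>R s) \<bullet> s - t) (v + t *\<^sub>R s + (t - (v + t *\<^sub>R s) \<bullet> s) *\<^sub>R s) \<partial>lborel \<partial>lborel)"
    by (intro nn_integral_cong nn_integral_lborel_translate[symmetric]) measurable
  also have "\<dots> = (\<integral>\<^sup>+t. \<integral>\<^sup>+v. H (v \<bullet> s) (v + (t - v \<bullet> s) *\<^sub>R s) \<partial>lborel \<partial>lborel)"
    using s by (simp add: inner_add_left norm_eq_sqrt_inner algebra_simps)
  finally show ?thesis .
qed

lemma nn_integral_chebyshev:
  fixes f g w :: "'a \<Rightarrow> real"
  assumes [measurable]: "f \<in> borel_measurable M" "g \<in> borel_measurable M" "w \<in> borel_measurable M"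
    and nonneg: "\<And>x. f x \<ge> 0" "\<And>x. g x \<ge> 0" "\<And>x. w x \<ge> 0"
    and oppositely_ordered: "\<And>x y. (f x - f y) * (g x - g y) \<le> 0"
  shows "(\<integral>\<^sup>+x. ennreal (f x * g x * w x) \<partial>M) * (\<integral>\<^sup>+x. ennreal (w x) \<partial>M)
    \<le> (\<integral>\<^sup>+x. ennreal (f x * w x) \<partial>M) * (\<integral>\<^sup>+x. ennreal (g x * w x) \<partial>M)"
proof -
  let ?A = "\<integral>\<^sup>+x. ennreal (f x * g x * w x) \<partial>M"
  let ?Z = "\<integral>\<^sup>+x. ennreal (w x) \<partial>M"
  let ?B = "\<integral>\<^sup>+x. ennreal (f x * w x) \<partial>M"
  let ?C = "\<integral>\<^sup>+x. ennreal (g x * w x) \<partial>M"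
  have pointwise: "1 * (ennreal (f x * g x * w x) * ennreal (w y)) + 1 * (ennreal (w x) * ennreal (f y * g y * w y))
      \<le> 1 * (ennreal (f x * w x) * ennreal (g y * w y)) + 1 * (ennreal (g x * w x) * ennreal (f y * w y))" for x y
  proof -
    have "w x * w y * ((f x - f y) * (g x - g y)) \<le> 0"
      using nonneg oppositely_ordered[of x y] by (simp add: mult_nonneg_nonpos)
    then have "f x * g x * w x * w y + w x * (f y * g y * w y) \<le> f x * w x * (g y * w y) + g x * w x * (f y * w y)"
      by (simp add: algebra_simps)
    then show ?thesis
      using nonneg by (simp add: ennreal_mult[symmetric] ennreal_plus[symmetric] ennreal_leI del: ennreal_plus)
  qed
  have "1 * (?A * ?Z) + 1 * (?Z * ?A) = (\<integral>\<^sup>+x. \<integral>\<^sup>+y. 1 * (ennreal (f x * g x * w x) * ennreal (w y))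
      + 1 * (ennreal (w x) * ennreal (f y * g y * w y)) \<partial>M \<partial>M)"
    by (rule nn_integral_tensor_add[symmetric]) measurable
  also have "\<dots> \<le> (\<integral>\<^sup>+x. \<integral>\<^sup>+y. 1 * (ennreal (f x * w x) * ennreal (g y * w y))
      + 1 * (ennreal (g x * w x) * ennreal (f y * w y)) \<partial>M \<partial>M)"
    by (intro nn_integral_mono pointwise)
  also have "\<dots> = 1 * (?B * ?C) + 1 * (?C * ?B)"
    by (rule nn_integral_tensor_add) measurable
  finally have "2 * (?A * ?Z) \<le> 2 * (?B * ?C)"
    by (simp add: mult_2 mult.commute)
  then show ?thesis
    by (subst (asm) ennreal_mult_le_mult_iff) auto
qed

lemma nn_integral_abs_minus_shift:
  fixes \<phi> :: "real \<Rightarrow> ennreal" and \<alpha> :: real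
  assumes [measurable]: "\<phi> \<in> borel_measurable borel" and \<alpha>: "\<alpha> > 0"
  shows "(\<integral>\<^sup>+t. ennreal (indicator {t. \<alpha> \<le> \<bar>t\<bar>} t) * \<phi> (\<bar>t\<bar> - \<alpha>) \<partial>lborel)
    = 2 * (\<integral>\<^sup>+u. ennreal (indicator {0..} u) * \<phi> u \<partial>lborel)"
proof -
  have "(\<integral>\<^sup>+t. ennreal (indicator {t. \<alpha> \<le> \<bar>t\<bar>} t) * \<phi> (\<bar>t\<bar> - \<alpha>) \<partial>lborel)
      = (\<integral>\<^sup>+t. ennreal (indicator {\<alpha>..} t) * \<phi> (\<bar>t\<bar> - \<alpha>) + ennreal (indicator {..-\<alpha>} t) * \<phi> (\<bar>t\<bar> - \<alpha>) \<partial>lborel)"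
    using \<alpha> by (intro nn_integral_cong) (auto simp: indicator_def)
  also have "\<dots> = (\<integral>\<^sup>+t. ennreal (indicator {\<alpha>..} t) * \<phi> (\<bar>t\<bar> - \<alpha>) \<partial>lborel)
      + (\<integral>\<^sup>+t. ennreal (indicator {..-\<alpha>} t) * \<phi> (\<bar>t\<bar> - \<alpha>) \<partial>lborel)"
    by (rule nn_integral_add) measurable
  also have "(\<integral>\<^sup>+t. ennreal (indicator {\<alpha>..} t) * \<phi> (\<bar>t\<bar> - \<alpha>) \<partial>lborel) = (\<integral>\<^sup>+u. ennreal (indicator {0..} u) * \<phi> u \<partial>lborel)"
    using \<alpha> by (subst nn_integral_real_affine[where c=1 and t=\<alpha>]) (auto intro!: nn_integral_cong simp: indicator_def)
  also have "(\<integral>\<^sup>+t. ennreal (indicator {..-\<alpha>} t) * \<phi> (\<bar>t\<bar> - \<alpha>) \<partial>lborel) = (\<integral>\<^sup>+u. ennreal (indicator {0..} u) * \<phi> u \<partial>lborel)"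
    using \<alpha> by (subst nn_integral_real_affine[where c="-1" and t="-\<alpha>"]) (auto intro!: nn_integral_cong simp: indicator_def)
  finally show ?thesis by (simp add: mult_2)
qed

section \<open>Gaussian integrals\<close>

lemma gaussian_nn_integral_real:
  "(\<integral>\<^sup>+t. ennreal (exp (- t\<^sup>2 / 2)) \<partial>lborel) = ennreal (sqrt (2 * pi))"
proof -
  have "(\<integral>\<^sup>+t. ennreal (std_normal_density t) \<partial>lborel) = 1"
    by (subst nn_integral_eq_integral) auto
  moreover have "ennreal (exp (- t\<^sup>2 / 2)) = ennreal (sqrt (2 * pi)) * ennreal (std_normal_density t)" for t
    by (simp add: std_normal_density_def ennreal_mult[symmetric])
  ultimately show ?thesis by (simp add: nn_integral_cmult)
qed

lemma gaussian_nn_integral: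
  "(\<integral>\<^sup>+v. ennreal (exp (- (norm v)\<^sup>2 / 2)) \<partial>(lborel :: 'a::euclidean_space measure))
     = ennreal (sqrt (2 * pi) ^ DIM('a))"
proof -
  have factor: "ennreal (exp (- (norm v)\<^sup>2 / 2)) = (\<Prod>b\<in>Basis. ennreal (exp (- (v \<bullet> b)\<^sup>2 / 2)))" for v :: 'a
  proof -
    have "(norm v)\<^sup>2 = (\<Sum>b\<in>Basis. (v \<bullet> b)\<^sup>2)"
      unfolding power2_norm_eq_inner by (subst euclidean_inner) (simp add: power2_eq_square)
    then show ?thesis
      by (simp add: exp_sum[symmetric] sum_divide_distrib sum_negf prod_ennreal)
  qed
  have "(\<integral>\<^sup>+v. ennreal (exp (- (norm v)\<^sup>2 / 2)) \<partial>(lborel :: 'a measure))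
     = (\<integral>\<^sup>+v. (\<Prod>b\<in>Basis. ennreal (exp (- (v \<bullet> b)\<^sup>2 / 2))) \<partial>(lborel :: 'a measure))"
    by (intro nn_integral_cong factor)
  also have "\<dots> = (\<Prod>b\<in>(Basis::'a set). (\<integral>\<^sup>+t. ennreal (exp (- t\<^sup>2 / 2)) \<partial>lborel))"
    by (rule nn_integral_lborel_prod) auto
  finally show ?thesis using gaussian_nn_integral_real by (simp add: ennreal_power)
qed

lemma half_gaussian_nn_integral_pos_finite:
  defines "H \<equiv> \<integral>\<^sup>+u. ennreal (indicator {0..} u) * ennreal (exp (- u\<^sup>2 / 2)) \<partial>lborel"
  shows "H \<noteq> 0" and "H \<noteq> \<infinity>"
proof -
  have "H \<le> ennreal (sqrt (2 * pi))"
    unfolding H_def gaussian_nn_integral_real[symmetric] by (intro nn_integral_mono) (auto simp: indicator_def)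
  then show "H \<noteq> \<infinity>" by (auto simp: top_unique)
  have "ennreal (exp (- 1 / 2)) = (\<integral>\<^sup>+u. ennreal (exp (- 1 / 2)) * indicator {0..1::real} u \<partial>lborel)"
    by (subst nn_integral_cmult_indicator) auto
  also have "\<dots> \<le> H"
    unfolding H_def
  proof (intro nn_integral_mono)
    fix u :: real
    show "ennreal (exp (- 1 / 2)) * indicator {0..1} u \<le> ennreal (indicator {0..} u) * ennreal (exp (- u\<^sup>2 / 2))"
    proof (cases "u \<in> {0..1}")
      case True
      then have "u\<^sup>2 \<le> 1" by (auto intro: power_le_one)
      then show ?thesis using True by (simp add: ennreal_leI)
    qed simp
  qed
  finally show "H \<noteq> 0" by (auto simp: order.antisym_conv2)
qed

text \<open>Lebesgue-measure form of the independence of \<open>v \<bullet> s\<close> and the component of \<open>v\<close> orthogonal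
  to \<open>s\<close> under the standard Gaussian: the dummy variable \<open>t\<close> replaces the \<open>s\<close>-component of \<open>v\<close>.\<close>
lemma gaussian_split_direction:
  fixes s :: "'a::euclidean_space" and h :: "'a \<Rightarrow> ennreal"
  assumes s: "norm s = 1" and [measurable]: "h \<in> borel_measurable borel"
  shows "(\<integral>\<^sup>+t. ennreal (exp (- t\<^sup>2 / 2)) \<partial>lborel) * (\<integral>\<^sup>+v. ennreal (exp (- (norm v)\<^sup>2 / 2)) * h v \<partial>lborel)
    = (\<integral>\<^sup>+t. \<integral>\<^sup>+v. ennreal (exp (- t\<^sup>2 / 2) * exp (- (norm v)\<^sup>2 / 2)) * h (v + (t - v \<bullet> s) *\<^sub>R s) \<partial>lborel \<partial>lborel)"
proof -
  define H where "H t v = ennreal (exp (- t\<^sup>2 / 2) * exp (- (norm v)\<^sup>2 / 2)) * h v" for t :: real and v :: 'a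
  have [measurable]: "case_prod H \<in> borel_measurable (lborel \<Otimes>\<^sub>M lborel)"
    unfolding H_def by measurable
  have "(\<integral>\<^sup>+t. ennreal (exp (- t\<^sup>2 / 2)) \<partial>lborel) * (\<integral>\<^sup>+v. ennreal (exp (- (norm v)\<^sup>2 / 2)) * h v \<partial>lborel)
      = (\<integral>\<^sup>+t. \<integral>\<^sup>+v. H t v \<partial>lborel \<partial>lborel)"
    unfolding H_def by (simp add: nn_integral_cmult nn_integral_multc ennreal_mult mult.assoc)
  also have "\<dots> = (\<integral>\<^sup>+t. \<integral>\<^sup>+v. H (v \<bullet> s) (v + (t - v \<bullet> s) *\<^sub>R s) \<partial>lborel \<partial>lborel)"
    by (rule nn_integral_lborel_shear[OF _ s]) measurable
  also have "\<dots> = (\<integral>\<^sup>+t. \<integral>\<^sup>+v. ennreal (exp (- t\<^sup>2 / 2) * exp (- (norm v)\<^sup>2 / 2)) * h (v + (t - v \<bullet> s) *\<^sub>R s) \<partial>lborel \<partial>lborel)"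
  proof (intro nn_integral_cong)
    fix t v
    have "exp (- (v \<bullet> s)\<^sup>2 / 2) * exp (- (norm (v + (t - v \<bullet> s) *\<^sub>R s))\<^sup>2 / 2)
        = exp (- t\<^sup>2 / 2) * exp (- (norm v)\<^sup>2 / 2)"
      unfolding norm_replace_component[OF s] mult_exp_exp by (simp add: field_simps)
    then show "H (v \<bullet> s) (v + (t - v \<bullet> s) *\<^sub>R s)
        = ennreal (exp (- t\<^sup>2 / 2) * exp (- (norm v)\<^sup>2 / 2)) * h (v + (t - v \<bullet> s) *\<^sub>R s)"
      unfolding H_def by simp
  qed
  finally show ?thesis .
qed

lemma gaussian_mgf_norm_sq:
  fixes \<mu> :: real
  assumes "2 * \<mu> < 1"
  shows "(\<integral>\<^sup>+v. ennreal (exp (- (norm v)\<^sup>2 / 2) * exp (\<mu> * (norm v)\<^sup>2)) \<partial>(lborel :: 'a::euclidean_space measure))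
    = ennreal (1 / sqrt (1 - 2 * \<mu>) ^ DIM('a)) * (\<integral>\<^sup>+v. ennreal (exp (- (norm v)\<^sup>2 / 2)) \<partial>(lborel :: 'a measure))"
proof -
  define c where "c = sqrt (1 - 2 * \<mu>)"
  have c: "c > 0" "c\<^sup>2 = 1 - 2 * \<mu>" using assms by (auto simp: c_def)
  have "exp (- (norm v)\<^sup>2 / 2) * exp (\<mu> * (norm v)\<^sup>2) = exp (- (norm (c *\<^sub>R v))\<^sup>2 / 2)" for v :: 'a
    unfolding mult_exp_exp by (simp add: power_mult_distrib c(2) algebra_simps)
  then have "(\<integral>\<^sup>+v. ennreal (exp (- (norm v)\<^sup>2 / 2) * exp (\<mu> * (norm v)\<^sup>2)) \<partial>(lborel :: 'a measure))
      = (\<integral>\<^sup>+v. ennreal (exp (- (norm (c *\<^sub>R v))\<^sup>2 / 2)) \<partial>(lborel :: 'a measure))"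
    by simp
  also have "\<dots> = ennreal (1 / c ^ DIM('a)) * (\<integral>\<^sup>+v. ennreal (exp (- (norm v)\<^sup>2 / 2)) \<partial>(lborel :: 'a measure))"
    by (rule nn_integral_lborel_scaleR[where f="\<lambda>v. ennreal (exp (- (norm v)\<^sup>2 / 2))"]) (use c in auto)
  finally show ?thesis unfolding c_def .
qed

lemma gaussian_mgf_orth_norm_sq:
  fixes s :: "'a::euclidean_space" and \<mu> :: real
  assumes s: "norm s = 1" and \<mu>: "2 * \<mu> < 1"
  shows "(\<integral>\<^sup>+v. ennreal (exp (- (norm v)\<^sup>2 / 2) * exp (\<mu> * ((norm v)\<^sup>2 - (v \<bullet> s)\<^sup>2))) \<partial>lborel)
    = ennreal (1 / sqrt (1 - 2 * \<mu>) ^ (DIM('a) - 1)) * (\<integral>\<^sup>+v. ennreal (exp (- (norm v)\<^sup>2 / 2)) \<partial>(lborel :: 'a measure))"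
proof -
  define c where "c = sqrt (1 - 2 * \<mu>)"
  have c: "c > 0" using \<mu> by (simp add: c_def)
  let ?Z1 = "\<integral>\<^sup>+t. ennreal (exp (- t\<^sup>2 / 2)) \<partial>(lborel :: real measure)"
  let ?Zd = "\<integral>\<^sup>+v. ennreal (exp (- (norm v)\<^sup>2 / 2)) \<partial>(lborel :: 'a measure)"
  let ?E = "\<integral>\<^sup>+v. ennreal (exp (- (norm v)\<^sup>2 / 2) * exp (\<mu> * ((norm v)\<^sup>2 - (v \<bullet> s)\<^sup>2))) \<partial>(lborel :: 'a measure)"
  have mgf1: "(\<integral>\<^sup>+t. ennreal (exp (- t\<^sup>2 / 2) * exp (\<mu> * t\<^sup>2)) \<partial>lborel) = ennreal (1 / c) * ?Z1"
    using gaussian_mgf_norm_sq[OF \<mu>, where 'a=real] by (simp add: c_def)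
  have "?Z1 * (ennreal (1 / c ^ DIM('a)) * ?Zd)
      = ?Z1 * (\<integral>\<^sup>+v. ennreal (exp (- (norm v)\<^sup>2 / 2)) * ennreal (exp (\<mu> * (norm v)\<^sup>2)) \<partial>(lborel :: 'a measure))"
    using gaussian_mgf_norm_sq[OF \<mu>, where 'a='a] by (simp add: c_def ennreal_mult)
  also have "\<dots> = (\<integral>\<^sup>+t. \<integral>\<^sup>+v. ennreal (exp (- t\<^sup>2 / 2) * exp (- (norm v)\<^sup>2 / 2))
      * ennreal (exp (\<mu> * (norm (v + (t - v \<bullet> s) *\<^sub>R s))\<^sup>2)) \<partial>(lborel :: 'a measure) \<partial>lborel)"
    by (rule gaussian_split_direction[OF s]) measurable
  also have "\<dots> = (\<integral>\<^sup>+t. \<integral>\<^sup>+v. ennreal (exp (- t\<^sup>2 / 2) * exp (\<mu> * t\<^sup>2))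
      * ennreal (exp (- (norm v)\<^sup>2 / 2) * exp (\<mu> * ((norm v)\<^sup>2 - (v \<bullet> s)\<^sup>2))) \<partial>(lborel :: 'a measure) \<partial>lborel)"
    unfolding norm_replace_component[OF s]
    by (intro nn_integral_cong) (simp add: mult_exp_exp ennreal_mult[symmetric] algebra_simps del: ennreal_mult)
  also have "\<dots> = ennreal (1 / c) * ?Z1 * ?E"
    using mgf1 by (simp add: nn_integral_tensor)
  finally have "?Z1 * (ennreal (1 / c ^ DIM('a)) * ?Zd) = ?Z1 * (ennreal (1 / c) * ?E)"
    by (simp add: mult_ac)
  then have eq: "ennreal (1 / c ^ DIM('a)) * ?Zd = ennreal (1 / c) * ?E"
    using gaussian_nn_integral_real by (simp add: ennreal_mult_cancel_left)
  have pow: "c ^ DIM('a) = c * c ^ (DIM('a) - 1)"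
    using DIM_positive[where 'a='a] by (simp add: power_eq_if)
  have "ennreal c * ennreal (1 / c) = 1" "ennreal c * ennreal (1 / c ^ DIM('a)) = ennreal (1 / c ^ (DIM('a) - 1))"
    using c by (simp_all add: pow ennreal_mult[symmetric] del: ennreal_mult)
  then have "?E = ennreal c * (ennreal (1 / c) * ?E)" "ennreal c * (ennreal (1 / c ^ DIM('a)) * ?Zd) = ennreal (1 / c ^ (DIM('a) - 1)) * ?Zd"
    by (simp_all only: mult.assoc[symmetric] mult_1)
  then show ?thesis unfolding c_def[symmetric] eq[symmetric] by simp
qed

section \<open>The one-dimensional Gaussian tail\<close>

lemma tail_moment_constant_le:
  fixes p :: real
  assumes p: "p \<ge> 1"
  shows "(p / 2 / (1 / 4 * exp 1)) powr (p / 2) * sqrt 2 \<le> sqrt (2 * p) powr p"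
proof -
  have "sqrt 2 \<le> 3 / 2" by (rule real_le_lsqrt) (auto simp: power2_eq_square)
  also have "\<dots> \<le> 1 + p / 2" using p by simp
  also have "\<dots> \<le> exp (p / 2)" by (rule exp_ge_add_one_self)
  finally have "(2 * p) powr (p / 2) / exp (p / 2) * sqrt 2 \<le> (2 * p) powr (p / 2) / exp (p / 2) * exp (p / 2)"
    by (intro mult_left_mono) auto
  moreover have "(p / 2 / (1 / 4 * exp 1)) powr (p / 2) = (2 * p) powr (p / 2) / exp (p / 2)"
    using p by (simp add: powr_def ln_div exp_diff[symmetric] algebra_simps)
  ultimately show ?thesis using p by (simp add: sqrt_powr)
qed

text \<open>Split \<open>\<bar>t\<bar> = \<alpha> + z\<close> by convexity and absorb \<open>z powr p\<close> into half of the Gaussian decay,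
  \<open>z powr p \<le> K exp (z\<^sup>2 / 4)\<close>.\<close>
lemma shifted_tail_pointwise_le:
  fixes \<alpha> p t :: real
  assumes \<alpha>: "\<alpha> > 0" and p: "p \<ge> 1" and t: "\<alpha> \<le> \<bar>t\<bar>"
  defines "r \<equiv> sqrt (2 * p)" and "K \<equiv> (p / 2 / (1 / 4 * exp 1)) powr (p / 2)"
  shows "\<bar>t\<bar> powr p * exp (- (\<bar>t\<bar> - \<alpha>)\<^sup>2 / 2)
    \<le> (\<alpha> + r) powr (p - 1) * \<alpha> * exp (- (\<bar>t\<bar> - \<alpha>)\<^sup>2 / 2)
      + (\<alpha> + r) powr (p - 1) * K / r powr (p - 1) * exp (- (\<bar>t\<bar> - \<alpha>)\<^sup>2 / 4)"
proof -
  have r: "r > 0" using p by (simp add: r_def)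
  define z where "z = \<bar>t\<bar> - \<alpha>"
  have z: "z \<ge> 0" using t by (simp add: z_def)
  have "\<bar>t\<bar> powr p = (\<alpha> + z) powr p" by (simp add: z_def)
  also have "\<dots> \<le> (\<alpha> + r) powr (p - 1) * (\<alpha> powr p / \<alpha> powr (p - 1) + z powr p / r powr (p - 1))"
    by (rule powr_add_le_convex_split[OF \<alpha> r _ z p]) (use \<alpha> in simp)
  also have "\<alpha> powr p / \<alpha> powr (p - 1) = \<alpha>" using \<alpha> by (simp add: powr_diff)
  finally have split: "\<bar>t\<bar> powr p \<le> (\<alpha> + r) powr (p - 1) * (\<alpha> + z powr p / r powr (p - 1))" .
  have "z powr p = (z\<^sup>2) powr (p / 2)"
    using z sqrt_powr[of "z\<^sup>2" p] by simp
  also have "\<dots> \<le> K * exp (1 / 4 * z\<^sup>2)"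
    unfolding K_def by (rule powr_le_mult_exp) (use p in auto)
  finally have moment: "z powr p \<le> K * exp (1 / 4 * z\<^sup>2)" .
  have "\<bar>t\<bar> powr p * exp (- z\<^sup>2 / 2) \<le> (\<alpha> + r) powr (p - 1) * (\<alpha> + z powr p / r powr (p - 1)) * exp (- z\<^sup>2 / 2)"
    by (rule mult_right_mono[OF split]) simp
  also have "\<dots> \<le> (\<alpha> + r) powr (p - 1) * (\<alpha> + K * exp (1 / 4 * z\<^sup>2) / r powr (p - 1)) * exp (- z\<^sup>2 / 2)"
    using moment r \<alpha> by (intro mult_right_mono mult_left_mono add_left_mono divide_right_mono) auto
  also have "\<dots> = (\<alpha> + r) powr (p - 1) * \<alpha> * exp (- z\<^sup>2 / 2)
      + (\<alpha> + r) powr (p - 1) * K / r powr (p - 1) * (exp (1 / 4 * z\<^sup>2) * exp (- z\<^sup>2 / 2))"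
    by (simp add: algebra_simps)
  also have "exp (1 / 4 * z\<^sup>2) * exp (- z\<^sup>2 / 2) = exp (- z\<^sup>2 / 4)"
    unfolding mult_exp_exp by (simp add: field_simps)
  finally show ?thesis unfolding z_def .
qed

lemma shifted_tail_weight_pos_finite:
  fixes \<alpha> :: real
  assumes \<alpha>: "\<alpha> > 0"
  defines "Z \<equiv> \<integral>\<^sup>+t. ennreal (indicator {t. \<alpha> \<le> \<bar>t\<bar>} t * exp (- (\<bar>t\<bar> - \<alpha>)\<^sup>2 / 2)) \<partial>lborel"
  shows "Z = 2 * (\<integral>\<^sup>+u. ennreal (indicator {0..} u) * ennreal (exp (- u\<^sup>2 / 2)) \<partial>lborel)"
    and "Z \<noteq> 0" and "Z \<noteq> \<infinity>"
proof -
  show Z: "Z = 2 * (\<integral>\<^sup>+u. ennreal (indicator {0..} u) * ennreal (exp (- u\<^sup>2 / 2)) \<partial>lborel)"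
    unfolding Z_def using nn_integral_abs_minus_shift[where \<phi>="\<lambda>u. ennreal (exp (- u\<^sup>2 / 2))", OF _ \<alpha>]
    by (simp add: ennreal_mult)
  then show "Z \<noteq> 0" "Z \<noteq> \<infinity>"
    using half_gaussian_nn_integral_pos_finite by (auto simp: ennreal_mult_eq_top_iff)
qed

lemma shifted_tail_quarter_integral:
  fixes \<alpha> :: real
  assumes \<alpha>: "\<alpha> > 0"
  shows "(\<integral>\<^sup>+t. ennreal (indicator {t. \<alpha> \<le> \<bar>t\<bar>} t * exp (- (\<bar>t\<bar> - \<alpha>)\<^sup>2 / 4)) \<partial>lborel)
    = ennreal (sqrt 2) * (\<integral>\<^sup>+t. ennreal (indicator {t. \<alpha> \<le> \<bar>t\<bar>} t * exp (- (\<bar>t\<bar> - \<alpha>)\<^sup>2 / 2)) \<partial>lborel)"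
proof -
  let ?H = "\<integral>\<^sup>+u. ennreal (indicator {0..} u) * ennreal (exp (- u\<^sup>2 / 2)) \<partial>lborel"
  have "(\<integral>\<^sup>+t. ennreal (indicator {t. \<alpha> \<le> \<bar>t\<bar>} t * exp (- (\<bar>t\<bar> - \<alpha>)\<^sup>2 / 4)) \<partial>lborel)
      = 2 * (\<integral>\<^sup>+u. ennreal (indicator {0..} u) * ennreal (exp (- u\<^sup>2 / 4)) \<partial>lborel)"
    using nn_integral_abs_minus_shift[where \<phi>="\<lambda>u. ennreal (exp (- u\<^sup>2 / 4))", OF _ \<alpha>]
    by (simp add: ennreal_mult)
  also have "(\<integral>\<^sup>+u. ennreal (indicator {0..} u) * ennreal (exp (- u\<^sup>2 / 4)) \<partial>lborel)
      = (\<integral>\<^sup>+u. ennreal (indicator {0..} ((1 / sqrt 2) *\<^sub>R u)) * ennreal (exp (- ((1 / sqrt 2) *\<^sub>R u)\<^sup>2 / 2)) \<partial>lborel)"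
    by (intro nn_integral_cong) (simp add: power_divide indicator_def zero_le_divide_iff)
  also have "\<dots> = ennreal (sqrt 2) * ?H"
    using nn_integral_lborel_scaleR[where f="\<lambda>u. ennreal (indicator {0..} u) * ennreal (exp (- u\<^sup>2 / 2))" and c="1 / sqrt 2"]
    by simp
  finally show ?thesis
    unfolding shifted_tail_weight_pos_finite(1)[OF \<alpha>] by (simp add: mult_ac)
qed

lemma shifted_tail_moment_le:
  fixes \<alpha> p :: real
  assumes \<alpha>: "\<alpha> > 0" and p: "p \<ge> 1"
  defines "w \<equiv> \<lambda>t. indicator {t. \<alpha> \<le> \<bar>t\<bar>} t * exp (- (\<bar>t\<bar> - \<alpha>)\<^sup>2 / 2)"
  shows "(\<integral>\<^sup>+t. ennreal (\<bar>t\<bar> powr p * w t) \<partial>lborel)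
    \<le> ennreal ((\<alpha> + sqrt (2 * p)) powr p) * (\<integral>\<^sup>+t. ennreal (w t) \<partial>lborel)"
proof -
  define r where "r = sqrt (2 * p)"
  define K where "K = (p / 2 / (1 / 4 * exp 1)) powr (p / 2)"
  define c1 where "c1 = (\<alpha> + r) powr (p - 1) * \<alpha>"
  define c2 where "c2 = (\<alpha> + r) powr (p - 1) * K / r powr (p - 1)"
  let ?S = "{t::real. \<alpha> \<le> \<bar>t\<bar>}"
  let ?Z = "\<integral>\<^sup>+t. ennreal (w t) \<partial>lborel"
  have r: "r > 0" using p by (simp add: r_def)
  have c12: "c1 \<ge> 0" "c2 \<ge> 0" using \<alpha> r by (auto simp: c1_def c2_def K_def)
  have "(\<integral>\<^sup>+t. ennreal (\<bar>t\<bar> powr p * w t) \<partial>lborel)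
      \<le> (\<integral>\<^sup>+t. ennreal c1 * ennreal (w t) + ennreal c2 * ennreal (indicator ?S t * exp (- (\<bar>t\<bar> - \<alpha>)\<^sup>2 / 4)) \<partial>lborel)"
  proof (intro nn_integral_mono)
    fix t :: real
    have "\<bar>t\<bar> powr p * w t \<le> c1 * w t + c2 * (indicator ?S t * exp (- (\<bar>t\<bar> - \<alpha>)\<^sup>2 / 4))"
      using shifted_tail_pointwise_le[OF \<alpha> p, of t]
      by (cases "t \<in> ?S") (simp_all add: w_def c1_def c2_def r_def K_def algebra_simps)
    then show "ennreal (\<bar>t\<bar> powr p * w t)
        \<le> ennreal c1 * ennreal (w t) + ennreal c2 * ennreal (indicator ?S t * exp (- (\<bar>t\<bar> - \<alpha>)\<^sup>2 / 4))"
      using c12 by (simp add: w_def ennreal_plus[symmetric] ennreal_mult[symmetric] ennreal_leI del: ennreal_plus)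
  qed
  also have "\<dots> = ennreal (c1 + c2 * sqrt 2) * ?Z"
    using c12 shifted_tail_quarter_integral[OF \<alpha>]
    by (simp add: w_def nn_integral_add nn_integral_cmult ennreal_plus ennreal_mult distrib_right mult.assoc)
  also have "\<dots> \<le> ennreal ((\<alpha> + r) powr p) * ?Z"
  proof (intro mult_right_mono ennreal_leI)
    have "K * sqrt 2 / r powr (p - 1) \<le> r powr p / r powr (p - 1)"
      using tail_moment_constant_le[OF p] r by (intro divide_right_mono) (auto simp: K_def r_def)
    also have "\<dots> = r" using r by (simp add: powr_diff)
    finally have "c2 * sqrt 2 \<le> (\<alpha> + r) powr (p - 1) * r"
      using \<alpha> r unfolding c2_def by (simp add: mult_left_mono divide_simps mult.assoc)
    then have "c1 + c2 * sqrt 2 \<le> (\<alpha> + r) powr (p - 1) * (\<alpha> + r)"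
      unfolding c1_def by (simp add: distrib_left)
    also have "\<dots> = (\<alpha> + r) powr p" using \<alpha> r by (simp add: powr_diff)
    finally show "c1 + c2 * sqrt 2 \<le> (\<alpha> + r) powr p" .
  qed simp
  finally show ?thesis unfolding r_def .
qed

lemma shifted_tail_moment_exp_weighted_le:
  fixes \<alpha> p :: real
  assumes \<alpha>: "\<alpha> > 0" and p: "p \<ge> 1"
  defines "w \<equiv> \<lambda>t. indicator {t. \<alpha> \<le> \<bar>t\<bar>} t * exp (- (\<bar>t\<bar> - \<alpha>)\<^sup>2 / 2)"
  shows "(\<integral>\<^sup>+t. ennreal (\<bar>t\<bar> powr p * exp (- \<alpha> * \<bar>t\<bar>) * w t) \<partial>lborel)
    \<le> ennreal ((\<alpha> + sqrt (2 * p)) powr p) * (\<integral>\<^sup>+t. ennreal (exp (- \<alpha> * \<bar>t\<bar>) * w t) \<partial>lborel)"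
proof -
  define g where "g t = exp (- \<alpha> * \<bar>t\<bar>)" for t :: real
  define f where "f t = \<bar>t\<bar> powr p" for t :: real
  let ?A = "\<integral>\<^sup>+t. ennreal (f t * g t * w t) \<partial>lborel"
  let ?Z = "\<integral>\<^sup>+t. ennreal (w t) \<partial>lborel"
  let ?C = "\<integral>\<^sup>+t. ennreal (g t * w t) \<partial>lborel"
  have [measurable]: "w \<in> borel_measurable borel" "g \<in> borel_measurable borel" "f \<in> borel_measurable borel"
    unfolding w_def g_def f_def by measurable
  have "(f u - f v) * (g u - g v) \<le> 0" for u v
  proof (cases "\<bar>u\<bar> \<le> \<bar>v\<bar>")
    case True
    then have "f u \<le> f v" "g v \<le> g u" using p \<alpha> by (auto simp: f_def g_def intro: powr_mono2)
    then show ?thesis by (simp add: mult_nonpos_nonneg)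
  next
    case False
    then have "f v \<le> f u" "g u \<le> g v" using p \<alpha> by (auto simp: f_def g_def intro: powr_mono2)
    then show ?thesis by (simp add: mult_nonneg_nonpos)
  qed
  then have "?A * ?Z \<le> (\<integral>\<^sup>+t. ennreal (f t * w t) \<partial>lborel) * ?C"
    by (intro nn_integral_chebyshev) (auto simp: f_def g_def w_def)
  also have "\<dots> \<le> (ennreal ((\<alpha> + sqrt (2 * p)) powr p) * ?Z) * ?C"
    using shifted_tail_moment_le[OF \<alpha> p] by (intro mult_right_mono) (simp_all add: f_def w_def)
  finally have "?Z * ?A \<le> ?Z * (ennreal ((\<alpha> + sqrt (2 * p)) powr p) * ?C)"
    by (simp add: mult_ac)
  moreover have "?Z \<noteq> 0" "?Z \<noteq> \<infinity>"
    using shifted_tail_weight_pos_finite(2,3)[OF \<alpha>] by (simp_all add: w_def)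
  ultimately show ?thesis
    by (simp add: ennreal_mult_le_mult_iff f_def g_def)
qed

lemma gaussian_tail_moment_le:
  fixes \<alpha> p :: real
  assumes \<alpha>: "\<alpha> > 0" and p: "p \<ge> 1"
  shows "(\<integral>\<^sup>+t. ennreal (exp (- t\<^sup>2 / 2) * (indicator {t. \<alpha> \<le> \<bar>t\<bar>} t * \<bar>t\<bar> powr p)) \<partial>lborel)
    \<le> ennreal ((\<alpha> + sqrt (2 * p)) powr p) * (\<integral>\<^sup>+t. ennreal (exp (- t\<^sup>2 / 2) * indicator {t. \<alpha> \<le> \<bar>t\<bar>} t) \<partial>lborel)"
proof -
  define w where "w t = indicator {t. \<alpha> \<le> \<bar>t\<bar>} t * exp (- (\<bar>t\<bar> - \<alpha>)\<^sup>2 / 2)" for t :: real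
  let ?E = "ennreal (exp (\<alpha>\<^sup>2 / 2))"
  have w: "w t \<ge> 0" for t by (simp add: w_def)
  have [measurable]: "w \<in> borel_measurable borel" unfolding w_def by measurable
  have factor: "exp (- t\<^sup>2 / 2) * indicator {t. \<alpha> \<le> \<bar>t\<bar>} t = exp (\<alpha>\<^sup>2 / 2) * (exp (- \<alpha> * \<bar>t\<bar>) * w t)" for t
  proof -
    have "- t\<^sup>2 / 2 = \<alpha>\<^sup>2 / 2 + (- \<alpha> * \<bar>t\<bar> + - (\<bar>t\<bar> - \<alpha>)\<^sup>2 / 2)"
      by (simp add: power2_eq_square abs_mult_self_eq field_simps)
    then show ?thesis by (simp add: w_def mult_exp_exp mult_ac)
  qed
  have moment_factor: "exp (- t\<^sup>2 / 2) * (indicator {t. \<alpha> \<le> \<bar>t\<bar>} t * \<bar>t\<bar> powr p)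
      = exp (\<alpha>\<^sup>2 / 2) * (\<bar>t\<bar> powr p * exp (- \<alpha> * \<bar>t\<bar>) * w t)" for t
    using factor[of t] by (simp add: mult_ac)
  have moment: "(\<integral>\<^sup>+t. ennreal (exp (- t\<^sup>2 / 2) * (indicator {t. \<alpha> \<le> \<bar>t\<bar>} t * \<bar>t\<bar> powr p)) \<partial>lborel)
      = ?E * (\<integral>\<^sup>+t. ennreal (\<bar>t\<bar> powr p * exp (- \<alpha> * \<bar>t\<bar>) * w t) \<partial>lborel)"
    unfolding moment_factor by (simp add: ennreal_mult' nn_integral_cmult)
  have mass: "(\<integral>\<^sup>+t. ennreal (exp (- t\<^sup>2 / 2) * indicator {t. \<alpha> \<le> \<bar>t\<bar>} t) \<partial>lborel)
      = ?E * (\<integral>\<^sup>+t. ennreal (exp (- \<alpha> * \<bar>t\<bar>) * w t) \<partial>lborel)"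
    unfolding factor by (simp add: ennreal_mult' nn_integral_cmult)
  show ?thesis
    unfolding moment mass w_def
    using mult_left_mono[OF shifted_tail_moment_exp_weighted_le[OF \<alpha> p], of ?E] by (simp add: mult_ac)
qed

section \<open>The component orthogonal to the direction\<close>

lemma orth_moment_constant_le:
  fixes p :: real and D :: nat
  assumes p: "p \<ge> 1" and D: "D \<ge> 1"
  defines "\<mu> \<equiv> p / (2 * (real D + p))"
  shows "(p / 2 / (\<mu> * exp 1)) powr (p / 2) * (1 / sqrt (1 - 2 * \<mu>) ^ (D - 1)) \<le> sqrt (real D + p - 1) powr p"
proof -
  define d where "d = real D"
  define c where "c = sqrt (1 - 2 * \<mu>)"
  have d: "d \<ge> 1" using D by (simp add: d_def)
  have \<mu>: "\<mu> > 0" using p d by (simp add: \<mu>_def d_def)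
  have "1 - 2 * \<mu> = d / (d + p)" using p d by (simp add: \<mu>_def d_def field_simps)
  then have c: "c > 0" and ln_c: "ln c = (ln d - ln (d + p)) / 2"
    using d p by (simp_all add: c_def ln_sqrt ln_div)
  have base: "p / 2 / (\<mu> * exp 1) = (d + p) / exp 1" using p d by (simp add: \<mu>_def d_def field_simps)
  have ln_le_div: "ln (d + p) - ln d \<le> p / d"
  proof -
    have "ln ((d + p) / d) \<le> (d + p) / d - 1" using d p by (intro ln_le_minus_one) auto
    then show ?thesis using d p by (simp add: ln_div field_simps)
  qed
  have ln_le_inv: "ln (d + p) - ln (d + p - 1) \<le> 1 / d"
  proof -
    have "ln ((d + p) / (d + p - 1)) \<le> (d + p) / (d + p - 1) - 1" using d p by (intro ln_le_minus_one) auto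
    also have "\<dots> = 1 / (d + p - 1)" using d p by (simp add: field_simps)
    also have "\<dots> \<le> 1 / d" using d p by (simp add: frac_le)
    finally show ?thesis using d p by (simp add: ln_div)
  qed
  have "ln ((p / 2 / (\<mu> * exp 1)) powr (p / 2) * (1 / c ^ (D - 1)))
      = p / 2 * (ln (d + p) - 1) + (d - 1) / 2 * (ln (d + p) - ln d)"
    using c d p D unfolding base
    by (simp add: ln_mult ln_div ln_powr ln_realpow ln_c d_def of_nat_diff algebra_simps) (simp add: field_simps)
  also have "\<dots> = p / 2 * (ln (d + p) - ln (d + p - 1)) + (d - 1) / 2 * (ln (d + p) - ln d) - p / 2
      + p / 2 * ln (d + p - 1)"
    by (simp add: algebra_simps)
  also have "\<dots> \<le> p / 2 * (1 / d) + (d - 1) / 2 * (p / d) - p / 2 + p / 2 * ln (d + p - 1)"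
    using ln_le_div ln_le_inv p d by (intro add_mono diff_mono mult_left_mono order.refl) auto
  also have "\<dots> = ln (sqrt (d + p - 1) powr p)"
    using d p by (simp add: ln_powr ln_sqrt field_simps)
  finally show ?thesis
    using c d p \<mu> by (subst ln_le_cancel_iff[symmetric]) (auto simp: c_def d_def)
qed

lemma gaussian_orth_moment_le:
  fixes s :: "'a::euclidean_space" and p :: real
  assumes s: "norm s = 1" and p: "p \<ge> 1"
  shows "(\<integral>\<^sup>+v. ennreal (exp (- (norm v)\<^sup>2 / 2) * ((norm v)\<^sup>2 - (v \<bullet> s)\<^sup>2) powr (p / 2)) \<partial>lborel)
    \<le> ennreal (sqrt (real DIM('a) + p - 1) powr p) * (\<integral>\<^sup>+v. ennreal (exp (- (norm v)\<^sup>2 / 2)) \<partial>(lborel::'a measure))"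
proof -
  \<comment> \<open>This \<open>\<mu>\<close> nearly minimises \<open>K / (1 - 2 \<mu>) powr ((d - 1) / 2)\<close>, which is what the bound below costs.\<close>
  define \<mu> where "\<mu> = p / (2 * (real DIM('a) + p))"
  define K where "K = (p / 2 / (\<mu> * exp 1)) powr (p / 2)"
  have \<mu>: "\<mu> > 0" "2 * \<mu> < 1" using p by (auto simp: \<mu>_def field_simps)
  have K: "K \<ge> 0" by (simp add: K_def)
  have "(\<integral>\<^sup>+v. ennreal (exp (- (norm v)\<^sup>2 / 2) * ((norm v)\<^sup>2 - (v \<bullet> s)\<^sup>2) powr (p / 2)) \<partial>lborel)
      \<le> (\<integral>\<^sup>+v. ennreal K * ennreal (exp (- (norm v)\<^sup>2 / 2) * exp (\<mu> * ((norm v)\<^sup>2 - (v \<bullet> s)\<^sup>2))) \<partial>(lborel::'a measure))"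
  proof (intro nn_integral_mono)
    fix v :: 'a
    have "((norm v)\<^sup>2 - (v \<bullet> s)\<^sup>2) powr (p / 2) \<le> K * exp (\<mu> * ((norm v)\<^sup>2 - (v \<bullet> s)\<^sup>2))"
      unfolding K_def by (rule powr_le_mult_exp) (use inner_sq_le_norm_sq[OF s, of v] p \<mu> in auto)
    then show "ennreal (exp (- (norm v)\<^sup>2 / 2) * ((norm v)\<^sup>2 - (v \<bullet> s)\<^sup>2) powr (p / 2))
        \<le> ennreal K * ennreal (exp (- (norm v)\<^sup>2 / 2) * exp (\<mu> * ((norm v)\<^sup>2 - (v \<bullet> s)\<^sup>2)))"
      using K by (simp add: ennreal_mult[symmetric] ennreal_leI mult.left_commute del: ennreal_mult)
  qed
  also have "\<dots> = ennreal K * (ennreal (1 / sqrt (1 - 2 * \<mu>) ^ (DIM('a) - 1)) * (\<integral>\<^sup>+v. ennreal (exp (- (norm v)\<^sup>2 / 2)) \<partial>(lborel::'a measure)))"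
    unfolding gaussian_mgf_orth_norm_sq[OF s \<mu>(2), symmetric] by (rule nn_integral_cmult) measurable
  also have "\<dots> = ennreal (K * (1 / sqrt (1 - 2 * \<mu>) ^ (DIM('a) - 1))) * (\<integral>\<^sup>+v. ennreal (exp (- (norm v)\<^sup>2 / 2)) \<partial>(lborel::'a measure))"
    using K \<mu> by (subst ennreal_mult) (simp_all add: mult.assoc)
  also have "\<dots> \<le> ennreal (sqrt (real DIM('a) + p - 1) powr p) * (\<integral>\<^sup>+v. ennreal (exp (- (norm v)\<^sup>2 / 2)) \<partial>(lborel::'a measure))"
    using orth_moment_constant_le[OF p, of "DIM('a)"]
    by (intro mult_right_mono ennreal_leI) (simp_all add: K_def \<mu>_def Suc_le_eq)
  finally show ?thesis .
qed

section \<open>Moments outside a slab\<close>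

lemma norm_powr_le_split:
  fixes v s :: "'a::real_inner" and a b p :: real
  assumes s: "norm s = 1" and a: "a > 0" and b: "b > 0" and p: "p \<ge> 1"
  shows "norm v powr p \<le> (a + b) powr (p - 1)
    * (\<bar>v \<bullet> s\<bar> powr p / a powr (p - 1) + ((norm v)\<^sup>2 - (v \<bullet> s)\<^sup>2) powr (p / 2) / b powr (p - 1))"
proof -
  define y where "y = (norm v)\<^sup>2 - (v \<bullet> s)\<^sup>2"
  have y: "y \<ge> 0" using inner_sq_le_norm_sq[OF s, of v] by (simp add: y_def)
  have "norm v = sqrt ((v \<bullet> s)\<^sup>2 + y)" by (simp add: y_def)
  also have "\<dots> \<le> sqrt ((\<bar>v \<bullet> s\<bar> + sqrt y)\<^sup>2)"
    using y by (intro real_sqrt_le_mono) (simp add: power2_sum)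
  also have "\<dots> = \<bar>v \<bullet> s\<bar> + sqrt y" using y by simp
  finally have "norm v powr p \<le> (\<bar>v \<bullet> s\<bar> + sqrt y) powr p"
    using p by (intro powr_mono2) auto
  also have "\<dots> \<le> (a + b) powr (p - 1) * (\<bar>v \<bullet> s\<bar> powr p / a powr (p - 1) + sqrt y powr p / b powr (p - 1))"
    by (rule powr_add_le_convex_split[OF a b _ _ p]) (use y in auto)
  finally show ?thesis using y by (simp add: y_def sqrt_powr)
qed

lemma gaussian_split_direction_le:
  fixes s :: "'a::euclidean_space" and h g1 g2 :: "'a \<Rightarrow> real" and f1 f2 :: "real \<Rightarrow> real"
  assumes s: "norm s = 1"
    and [measurable]: "h \<in> borel_measurable borel" "f1 \<in> borel_measurable borel" "f2 \<in> borel_measurable borel"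
      "g1 \<in> borel_measurable borel" "g2 \<in> borel_measurable borel"
    and nonneg: "\<And>t. f1 t \<ge> 0" "\<And>t. f2 t \<ge> 0" "\<And>v. g1 v \<ge> 0" "\<And>v. g2 v \<ge> 0" "c1 \<ge> 0" "c2 \<ge> 0"
    and le: "\<And>t v. h (v + (t - v \<bullet> s) *\<^sub>R s) \<le> c1 * f1 t * g1 v + c2 * f2 t * g2 v"
  shows "(\<integral>\<^sup>+t. ennreal (exp (- t\<^sup>2 / 2)) \<partial>lborel) * (\<integral>\<^sup>+v. ennreal (exp (- (norm v)\<^sup>2 / 2) * h v) \<partial>lborel)
    \<le> ennreal c1 * ((\<integral>\<^sup>+t. ennreal (exp (- t\<^sup>2 / 2) * f1 t) \<partial>lborel) * (\<integral>\<^sup>+v. ennreal (exp (- (norm v)\<^sup>2 / 2) * g1 v) \<partial>lborel))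
      + ennreal c2 * ((\<integral>\<^sup>+t. ennreal (exp (- t\<^sup>2 / 2) * f2 t) \<partial>lborel) * (\<integral>\<^sup>+v. ennreal (exp (- (norm v)\<^sup>2 / 2) * g2 v) \<partial>lborel))"
proof -
  have "(\<integral>\<^sup>+v. ennreal (exp (- (norm v)\<^sup>2 / 2) * h v) \<partial>lborel)
      = (\<integral>\<^sup>+v. ennreal (exp (- (norm v)\<^sup>2 / 2)) * ennreal (h v) \<partial>(lborel :: 'a measure))"
    by (simp add: ennreal_mult')
  then have "(\<integral>\<^sup>+t. ennreal (exp (- t\<^sup>2 / 2)) \<partial>lborel) * (\<integral>\<^sup>+v. ennreal (exp (- (norm v)\<^sup>2 / 2) * h v) \<partial>lborel)
      = (\<integral>\<^sup>+t. \<integral>\<^sup>+v. ennreal (exp (- t\<^sup>2 / 2) * exp (- (norm v)\<^sup>2 / 2)) * ennreal (h (v + (t - v \<bullet> s) *\<^sub>R s))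
          \<partial>(lborel :: 'a measure) \<partial>lborel)"
    using gaussian_split_direction[OF s, of "\<lambda>v. ennreal (h v)"] by simp
  also have "\<dots> \<le> (\<integral>\<^sup>+t. \<integral>\<^sup>+v. ennreal c1 * (ennreal (exp (- t\<^sup>2 / 2) * f1 t) * ennreal (exp (- (norm v)\<^sup>2 / 2) * g1 v))
      + ennreal c2 * (ennreal (exp (- t\<^sup>2 / 2) * f2 t) * ennreal (exp (- (norm v)\<^sup>2 / 2) * g2 v)) \<partial>lborel \<partial>lborel)"
  proof (intro nn_integral_mono)
    fix t :: real and v :: 'a
    have "exp (- t\<^sup>2 / 2) * exp (- (norm v)\<^sup>2 / 2) * h (v + (t - v \<bullet> s) *\<^sub>R s)
        \<le> c1 * ((exp (- t\<^sup>2 / 2) * f1 t) * (exp (- (norm v)\<^sup>2 / 2) * g1 v))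
          + c2 * ((exp (- t\<^sup>2 / 2) * f2 t) * (exp (- (norm v)\<^sup>2 / 2) * g2 v))"
      using mult_left_mono[OF le[of v t], of "exp (- t\<^sup>2 / 2) * exp (- (norm v)\<^sup>2 / 2)"]
      by (simp add: algebra_simps)
    then show "ennreal (exp (- t\<^sup>2 / 2) * exp (- (norm v)\<^sup>2 / 2)) * ennreal (h (v + (t - v \<bullet> s) *\<^sub>R s))
        \<le> ennreal c1 * (ennreal (exp (- t\<^sup>2 / 2) * f1 t) * ennreal (exp (- (norm v)\<^sup>2 / 2) * g1 v))
          + ennreal c2 * (ennreal (exp (- t\<^sup>2 / 2) * f2 t) * ennreal (exp (- (norm v)\<^sup>2 / 2) * g2 v))"
      using nonneg
      by (simp add: ennreal_mult'[symmetric] ennreal_mult[symmetric] ennreal_plus[symmetric] ennreal_leI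
          del: ennreal_plus ennreal_mult)
  qed
  also have "\<dots> = ennreal c1 * ((\<integral>\<^sup>+t. ennreal (exp (- t\<^sup>2 / 2) * f1 t) \<partial>lborel) * (\<integral>\<^sup>+v. ennreal (exp (- (norm v)\<^sup>2 / 2) * g1 v) \<partial>lborel))
      + ennreal c2 * ((\<integral>\<^sup>+t. ennreal (exp (- t\<^sup>2 / 2) * f2 t) \<partial>lborel) * (\<integral>\<^sup>+v. ennreal (exp (- (norm v)\<^sup>2 / 2) * g2 v) \<partial>lborel))"
    by (rule nn_integral_tensor_add) measurable
  finally show ?thesis .
qed

lemma gaussian_nn_integral_indicator_inner:
  fixes s :: "'a::euclidean_space" and S :: "real set"
  assumes s: "norm s = 1" and [measurable]: "S \<in> sets borel"
  shows "(\<integral>\<^sup>+t. ennreal (exp (- t\<^sup>2 / 2)) \<partial>lborel) * (\<integral>\<^sup>+v. ennreal (exp (- (norm v)\<^sup>2 / 2) * indicator S (v \<bullet> s)) \<partial>lborel)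
    = (\<integral>\<^sup>+t. ennreal (exp (- t\<^sup>2 / 2) * indicator S t) \<partial>lborel) * (\<integral>\<^sup>+v. ennreal (exp (- (norm v)\<^sup>2 / 2)) \<partial>(lborel :: 'a measure))"
proof -
  have "(\<integral>\<^sup>+t. ennreal (exp (- t\<^sup>2 / 2)) \<partial>lborel) * (\<integral>\<^sup>+v. ennreal (exp (- (norm v)\<^sup>2 / 2) * indicator S (v \<bullet> s)) \<partial>lborel)
      = (\<integral>\<^sup>+t. \<integral>\<^sup>+v. ennreal (exp (- t\<^sup>2 / 2) * exp (- (norm v)\<^sup>2 / 2))
          * ennreal (indicator S ((v + (t - v \<bullet> s) *\<^sub>R s) \<bullet> s)) \<partial>(lborel :: 'a measure) \<partial>lborel)"
    using gaussian_split_direction[OF s, of "\<lambda>v. ennreal (indicator S (v \<bullet> s))"] by (simp add: ennreal_mult')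
  also have "\<dots> = (\<integral>\<^sup>+t. \<integral>\<^sup>+v. ennreal (exp (- t\<^sup>2 / 2) * indicator S t) * ennreal (exp (- (norm v)\<^sup>2 / 2)) \<partial>(lborel :: 'a measure) \<partial>lborel)"
    unfolding inner_replace_component[OF s]
    by (intro nn_integral_cong) (simp add: ennreal_mult[symmetric] mult_ac del: ennreal_mult)
  also have "\<dots> = (\<integral>\<^sup>+t. ennreal (exp (- t\<^sup>2 / 2) * indicator S t) \<partial>lborel) * (\<integral>\<^sup>+v. ennreal (exp (- (norm v)\<^sup>2 / 2)) \<partial>(lborel :: 'a measure))"
    by (rule nn_integral_tensor) measurable
  finally show ?thesis .
qed

lemma gaussian_moment_outside_slab_le:
  fixes s :: "'a::euclidean_space" and \<alpha> p :: real
  assumes \<alpha>: "\<alpha> > 0" and p: "p \<ge> 1" and s: "norm s = 1"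
  defines "A \<equiv> {v. \<alpha> \<le> \<bar>v \<bullet> s\<bar>}"
  shows "(\<integral>\<^sup>+v. ennreal (exp (- (norm v)\<^sup>2 / 2) * (indicator A v * norm v powr p)) \<partial>lborel)
    \<le> ennreal ((\<alpha> + sqrt (2 * p) + sqrt (real DIM('a) + p - 1)) powr p)
       * (\<integral>\<^sup>+v. ennreal (exp (- (norm v)\<^sup>2 / 2) * indicator A v) \<partial>lborel)"
proof -
  define S where "S = {t::real. \<alpha> \<le> \<bar>t\<bar>}"
  define a where "a = \<alpha> + sqrt (2 * p)"
  define b where "b = sqrt (real DIM('a) + p - 1)"
  define c1 where "c1 = (a + b) powr (p - 1) / a powr (p - 1)"
  define c2 where "c2 = (a + b) powr (p - 1) / b powr (p - 1)"
  have a: "a > 0" using \<alpha> p by (simp add: a_def add_pos_nonneg)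
  have "real DIM('a) \<ge> 1" by (simp add: DIM_positive Suc_le_eq)
  then have b: "b > 0" unfolding b_def using p by (intro real_sqrt_gt_zero) linarith
  have c12: "c1 \<ge> 0" "c2 \<ge> 0" by (simp_all add: c1_def c2_def)
  have [measurable]: "A \<in> sets borel" "S \<in> sets borel" unfolding A_def S_def by measurable
  have A: "indicator A v = indicator S (v \<bullet> s)" for v :: 'a by (simp add: A_def S_def indicator_def)
  let ?Z1 = "\<integral>\<^sup>+t. ennreal (exp (- t\<^sup>2 / 2)) \<partial>(lborel::real measure)"
  let ?Zd = "\<integral>\<^sup>+v. ennreal (exp (- (norm v)\<^sup>2 / 2)) \<partial>(lborel::'a measure)"
  let ?T0 = "\<integral>\<^sup>+t. ennreal (exp (- t\<^sup>2 / 2) * indicator S t) \<partial>(lborel::real measure)"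
  let ?Q = "\<integral>\<^sup>+v. ennreal (exp (- (norm v)\<^sup>2 / 2) * indicator A v) \<partial>(lborel::'a measure)"
  have "norm (v + (t - v \<bullet> s) *\<^sub>R s) powr p \<le> c1 * \<bar>t\<bar> powr p + c2 * ((norm v)\<^sup>2 - (v \<bullet> s)\<^sup>2) powr (p / 2)"
    for t v
    using norm_powr_le_split[OF s a b p, of "v + (t - v \<bullet> s) *\<^sub>R s"]
    unfolding inner_replace_component[OF s] norm_replace_component[OF s]
    by (simp add: c1_def c2_def distrib_left)
  then have le: "indicator A (v + (t - v \<bullet> s) *\<^sub>R s) * norm (v + (t - v \<bullet> s) *\<^sub>R s) powr p
      \<le> c1 * (indicator S t * \<bar>t\<bar> powr p) * 1 + c2 * indicator S t * ((norm v)\<^sup>2 - (v \<bullet> s)\<^sup>2) powr (p / 2)"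
    for t v
    unfolding A inner_replace_component[OF s] by (simp add: indicator_def)
  have "?Z1 * (\<integral>\<^sup>+v. ennreal (exp (- (norm v)\<^sup>2 / 2) * (indicator A v * norm v powr p)) \<partial>lborel)
      \<le> ennreal c1 * ((\<integral>\<^sup>+t. ennreal (exp (- t\<^sup>2 / 2) * (indicator S t * \<bar>t\<bar> powr p)) \<partial>lborel)
          * (\<integral>\<^sup>+v. ennreal (exp (- (norm v)\<^sup>2 / 2) * 1) \<partial>(lborel::'a measure)))
        + ennreal c2 * (?T0 * (\<integral>\<^sup>+v. ennreal (exp (- (norm v)\<^sup>2 / 2) * ((norm v)\<^sup>2 - (v \<bullet> s)\<^sup>2) powr (p / 2)) \<partial>lborel))"
    by (rule gaussian_split_direction_le[OF s]) (measurable, use le c12 in auto)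
  also have "\<dots> = ennreal c1 * ((\<integral>\<^sup>+t. ennreal (exp (- t\<^sup>2 / 2) * (indicator S t * \<bar>t\<bar> powr p)) \<partial>lborel) * ?Zd)
        + ennreal c2 * (?T0 * (\<integral>\<^sup>+v. ennreal (exp (- (norm v)\<^sup>2 / 2) * ((norm v)\<^sup>2 - (v \<bullet> s)\<^sup>2) powr (p / 2)) \<partial>lborel))"
    by simp
  also have "\<dots> \<le> ennreal c1 * ((ennreal (a powr p) * ?T0) * ?Zd) + ennreal c2 * (?T0 * (ennreal (b powr p) * ?Zd))"
    using gaussian_tail_moment_le[OF \<alpha> p] gaussian_orth_moment_le[OF s p]
    by (intro add_mono mult_left_mono mult_right_mono) (simp_all add: S_def a_def b_def)
  also have "\<dots> = ennreal (c1 * a powr p + c2 * b powr p) * (?T0 * ?Zd)"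
    using c12 by (simp add: ennreal_plus ennreal_mult distrib_right mult_ac)
  also have "c1 * a powr p + c2 * b powr p = (a + b) powr p"
    using a b by (simp add: c1_def c2_def powr_diff) (simp add: add_divide_distrib[symmetric] distrib_left[symmetric])
  also have "?T0 * ?Zd = ?Z1 * ?Q"
    unfolding A by (rule gaussian_nn_integral_indicator_inner[OF s, symmetric]) measurable
  finally show ?thesis
    using gaussian_nn_integral_real by (simp add: ennreal_mult_le_mult_iff mult_ac a_def b_def)
qed

lemma cond_exp_event_nonneg:
  assumes "\<And>x. f x \<ge> 0"
  shows "cond_exp_event M f A \<ge> 0"
  using assms by (simp add: cond_exp_event_def integral_nonneg_AE)

lemma cond_exp_event_std_gaussian_le:
  fixes A :: "'a::euclidean_space set" and f :: "'a \<Rightarrow> real"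
  assumes [measurable]: "A \<in> sets borel" "f \<in> borel_measurable borel"
    and f: "\<And>v. f v \<ge> 0" and C: "C \<ge> 0"
    and le: "(\<integral>\<^sup>+v. ennreal (exp (- (norm v)\<^sup>2 / 2) * (indicator A v * f v)) \<partial>lborel)
      \<le> ennreal C * (\<integral>\<^sup>+v. ennreal (exp (- (norm v)\<^sup>2 / 2) * indicator A v) \<partial>lborel)"
  shows "cond_exp_event std_gaussian f A \<le> C"
proof -
  define K where "K = (2 * pi) powr (- real DIM('a) / 2)"
  have K: "K > 0" by (simp add: K_def)
  let ?I = "\<integral>\<^sup>+v. ennreal (exp (- (norm v)\<^sup>2 / 2) * (indicator A v * f v)) \<partial>(lborel::'a measure)"
  let ?Q = "\<integral>\<^sup>+v. ennreal (exp (- (norm v)\<^sup>2 / 2) * indicator A v) \<partial>(lborel::'a measure)"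
  have density: "std_gaussian = density lborel (\<lambda>x::'a. ennreal (K * exp (- (norm x)\<^sup>2 / 2)))"
    by (simp add: std_gaussian_def K_def)
  have num: "(\<integral>\<^sup>+x. ennreal (indicator A x * f x) \<partial>std_gaussian) = ennreal K * ?I"
    unfolding density using K
    by (subst nn_integral_density) (auto simp: ennreal_mult' nn_integral_cmult[symmetric] mult.assoc intro!: nn_integral_cong)
  have den: "emeasure std_gaussian A = ennreal K * ?Q"
    unfolding density using K
    by (subst emeasure_density) (auto simp: ennreal_mult ennreal_indicator nn_integral_cmult[symmetric] mult.assoc intro!: nn_integral_cong)
  have "?Q \<le> (\<integral>\<^sup>+v. ennreal (exp (- (norm v)\<^sup>2 / 2)) \<partial>(lborel::'a measure))"
    by (intro nn_integral_mono) (auto simp: indicator_def)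
  then have "?Q \<noteq> \<infinity>" using gaussian_nn_integral[where 'a='a] by (auto simp: top_unique)
  then have "emeasure std_gaussian A \<noteq> top"
    unfolding den by (simp add: ennreal_mult_eq_top_iff)
  then have m: "emeasure std_gaussian A = ennreal (measure std_gaussian A)"
    by (rule emeasure_eq_ennreal_measure)
  have "(\<integral>\<^sup>+x. ennreal (indicator A x * f x) \<partial>std_gaussian) \<le> ennreal C * emeasure std_gaussian A"
    unfolding num den using mult_left_mono[OF le, of "ennreal K"] by (simp add: mult_ac)
  then have "(\<integral>x. indicator A x * f x \<partial>std_gaussian) \<le> C * measure std_gaussian A"
    using C by (intro integral_real_bounded) (simp_all add: m ennreal_mult f)
  then show ?thesis
    using C by (cases "measure std_gaussian A = 0") (simp_all add: cond_exp_event_def divide_le_eq mult.commute)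
qed

theorem lemmaA10:
  fixes s :: "'a::euclidean_space" and \<alpha> p :: real
  assumes "\<alpha> > 0" and "p \<ge> 1" and "norm s = 1"
  shows "(cond_exp_event std_gaussian (\<lambda>v. norm v powr p) {v. \<bar>v \<bullet> s\<bar> \<ge> \<alpha>}) powr (1 / p)
           \<le> 2 * \<alpha> + sqrt (2 * p) + sqrt (real DIM('a) + p - 1)"
proof -
  \<comment> \<open>The argument gives the bound with \<open>\<alpha>\<close> in place of \<open>2 \<alpha>\<close>.\<close>
  define R where "R = \<alpha> + sqrt (2 * p) + sqrt (real DIM('a) + p - 1)"
  have R: "R > 0" using assms DIM_positive[where 'a='a] by (simp add: R_def add_pos_nonneg)
  have "cond_exp_event std_gaussian (\<lambda>v. norm v powr p) {v. \<bar>v \<bullet> s\<bar> \<ge> \<alpha>} \<le> R powr p"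
    using gaussian_moment_outside_slab_le[OF assms] unfolding R_def
    by (intro cond_exp_event_std_gaussian_le) auto
  then have "(cond_exp_event std_gaussian (\<lambda>v. norm v powr p) {v. \<bar>v \<bullet> s\<bar> \<ge> \<alpha>}) powr (1 / p) \<le> (R powr p) powr (1 / p)"
    using assms by (intro powr_mono2 cond_exp_event_nonneg) auto
  also have "\<dots> = R" using R assms by (simp add: powr_powr)
  finally show ?thesis using assms by (simp add: R_def)
qed

end
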